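(* Let $S\subseteq\mathbb{N}^{\mathbb{N}}$. Suppose that for every finite sequence $g\in\mathbb{N}^{<\mathbb{N}}$ there are sequences $g_1,g_2\in\mathbb{N}^{\mathbb{N}}$, both extending $g$, with $g_1\in S$ and $g_2\notin S$. Then $S$ is not guessable.
   Context: $\mathbb{N}^{\mathbb{N}}$ is the set of all sequences $f:\mathbb{N}\to\mathbb{N}$ and $\mathbb{N}^{<\mathbb{N}}$ is the set of all finite sequences of naturals. A function $G:\mathbb{N}^{<\mathbb{N}}\to\{0,1\}$ is a guesser for $S\subseteq\mathbb{N}^{\mathbb{N}}$ if for every $f:\mathbb{N}\to\mathbb{N}$ there is some $m>0$ such that for all $n>m$, $G(f(0),\ldots,f(n))=1$ if $f\in S$ and $G(f(0),\ldots,f(n))=0$ if $f\notin S$. A set $S$ is guessable if it has a guesser. *)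

theory Defs
  imports Main
begin

text \<open>Finite sequences of naturals are lists; infinite sequences are functions nat => nat.
  The prefix (f(0),...,f(n)) is  map f [0..<Suc n].\<close>

definition is_guesser :: "(nat list \<Rightarrow> bool) \<Rightarrow> (nat \<Rightarrow> nat) set \<Rightarrow> bool" where
  "is_guesser G S \<longleftrightarrow>
     (\<forall>f :: nat \<Rightarrow> nat. \<exists>m > 0. \<forall>n > m.
        (f \<in> S \<longrightarrow> G (map f [0..<Suc n]) = True) \<and>
        (f \<notin> S \<longrightarrow> G (map f [0..<Suc n]) = False))"

definition guessable :: "(nat \<Rightarrow> nat) set \<Rightarrow> bool" where
  "guessable S \<longleftrightarrow> (\<exists>G. is_guesser G S)"

definition extends :: "(nat \<Rightarrow> nat) \<Rightarrow> nat list \<Rightarrow> bool" where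
  "extends f g \<longleftrightarrow> map f [0..<length g] = g"

end

theory Submission
  imports Defs "HOL-Library.Sublist"
begin

text \<open>Suppose G guessed S. Since every finite sequence extends both into S and out of S, and G
  eventually answers correctly along any infinite sequence, every finite sequence has proper
  extensions on which G answers 1 and proper extensions on which it answers 0. Alternating
  between the two builds an infinite sequence along whose prefixes G changes its answer
  infinitely often, so G cannot be a guesser.\<close>

lemma extends_iff_nth: "extends f xs \<longleftrightarrow> (\<forall>k < length xs. f k = xs ! k)"
  unfolding extends_def list_eq_iff_nth_eq by simp

lemma prefix_nth: "prefix xs ys \<Longrightarrow> k < length xs \<Longrightarrow> xs ! k = ys ! k"
  by (auto simp: prefix_def nth_append)

lemma prefix_chain_mono:
  assumes "\<And>i. prefix (L i) (L (Suc i))" and "j \<le> i"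
  shows "prefix (L j) (L i)"
  using \<open>j \<le> i\<close>
proof (induction rule: dec_induct)
  case (step i)
  then show ?case using assms(1)[of i] prefix_order.trans by blast
qed simp

lemma prefix_chain_limit:
  fixes L :: "nat \<Rightarrow> 'a list"
  assumes chain: "\<And>i. prefix (L i) (L (Suc i))" and long: "\<And>i. i \<le> length (L i)"
  obtains f where "\<And>i k. k < length (L i) \<Longrightarrow> f k = L i ! k"
proof
  fix i k assume k: "k < length (L i)"
  have "k < length (L (Suc k))" using long[of "Suc k"] by simp
  moreover have "prefix (L (Suc k)) (L i) \<or> prefix (L i) (L (Suc k))"
    using prefix_chain_mono[of L, OF chain] by (cases "Suc k \<le> i") auto
  ultimately show "L (Suc k) ! k = L i ! k" using k by (auto dest: prefix_nth)
qed

lemma is_guesser_eventually_correct: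
  assumes "is_guesser G S"
  obtains m where "\<And>xs. extends f xs \<Longrightarrow> m < length xs \<Longrightarrow> G xs = (f \<in> S)"
proof -
  obtain m where m: "\<forall>n > m. (f \<in> S \<longrightarrow> G (map f [0..<Suc n])) \<and>
      (f \<notin> S \<longrightarrow> \<not> G (map f [0..<Suc n]))"
    using assms unfolding is_guesser_def by auto
  show thesis
  proof (rule that[of "Suc m"])
    fix xs assume ext: "extends f xs" and len: "Suc m < length xs"
    then obtain n where "length xs = Suc n" and "m < n"
      by (metis Suc_lessE Suc_lessD)
    then show "G xs = (f \<in> S)"
      using m ext unfolding extends_def by metis
  qed
qed

lemma is_guesser_forced_answer:
  assumes G: "is_guesser G S" and dense: "\<exists>g1 g2. extends g1 p \<and> extends g2 p \<and> g1 \<in> S \<and> g2 \<notin> S"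
  shows "\<exists>q. strict_prefix p q \<and> G q = b"
proof -
  obtain g where ext: "extends g p" and answer: "(g \<in> S) = b"
    using dense by (cases b) auto
  obtain m where m: "\<And>xs. extends g xs \<Longrightarrow> m < length xs \<Longrightarrow> G xs = (g \<in> S)"
    using is_guesser_eventually_correct[OF G] by blast
  define q where "q = map g [0..<Suc (max m (length p))]"
  have "p = take (length p) q"
    using ext unfolding extends_def q_def by (simp add: take_map)
  moreover have "length p < length q"
    unfolding q_def by simp
  ultimately have "strict_prefix p q"
    by (metis take_is_prefix prefix_order.le_neq_trans less_irrefl_nat)
  moreover have "G q = b"
    using m[of q] answer unfolding q_def extends_def by simp
  ultimately show ?thesis by blast
qed

lemma not_is_guesser_if_answers_forced:
  assumes forced: "\<And>p b. \<exists>q. strict_prefix p q \<and> G q = b"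
  shows "\<not> is_guesser G S"
proof
  assume G: "is_guesser G S"
  define next_seq where "next_seq b p = (SOME q. strict_prefix p q \<and> G q = b)" for b p
  have next_seq: "strict_prefix p (next_seq b p) \<and> G (next_seq b p) = b" for b p
    unfolding next_seq_def using someI_ex[OF forced] .
  define L where "L = rec_nat [] (\<lambda>i. next_seq (even i))"
  have L_Suc: "L (Suc i) = next_seq (even i) (L i)" for i
    unfolding L_def by simp
  have chain: "prefix (L i) (L (Suc i))" for i
    using next_seq[of "L i" "even i"] L_Suc[of i] by (simp add: strict_prefix_def)
  have long: "i \<le> length (L i)" for i
  proof (induction i)
    case (Suc i)
    then show ?case using prefix_length_less[of "L i" "L (Suc i)"] next_seq L_Suc by simp
  qed simp
  obtain f where f: "\<And>i k. k < length (L i) \<Longrightarrow> f k = L i ! k"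
    using prefix_chain_limit[OF chain long] by blast
  obtain m where m: "\<And>xs. extends f xs \<Longrightarrow> m < length xs \<Longrightarrow> G xs = (f \<in> S)"
    using is_guesser_eventually_correct[OF G] by blast
  have "G (L (Suc i)) = (f \<in> S)" if "m \<le> i" for i
    using m[of "L (Suc i)"] f long[of "Suc i"] that by (simp add: extends_iff_nth)
  then have "G (L (Suc m)) = G (L (Suc (Suc m)))" by simp
  then show False using next_seq L_Suc by simp
qed

theorem theorem2p2:
  fixes S :: "(nat \<Rightarrow> nat) set"
  assumes "\<forall>g :: nat list. \<exists>g1 g2. extends g1 g \<and> extends g2 g \<and> g1 \<in> S \<and> g2 \<notin> S"
  shows "\<not> guessable S"
  unfolding guessable_def
  using assms is_guesser_forced_answer not_is_guesser_if_answers_forced by blast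

end
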